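(* Let $d$ and $k$ be positive integers and let $p$ be the smallest positive integer such that $k<\kappa_p$. If $d$ is a proper divisor of $p$ (that is, $d$ divides $p$ and $d\ne p$) and either (i) $k-\kappa_{p-1}=p/d$, or (ii) $\kappa_p-k=p/d$, then $\delta_z(d,k)\neq\lfloor\lambda(d,k)\rfloor$.
   Context: A point of $\mathbb{Z}^d$ is primitive if its coordinates are relatively prime; $\mathbb{P}^d_\circ$ denotes the set of primitive points of $\mathbb{Z}^d$ whose first non-zero coordinate is positive. For a finite $\mathcal{X}\subset\mathbb{R}^d$, $\kappa(\mathcal{X})=\max_{1\le i\le d}\sum_{x\in\mathcal{X}}|x_i|$, and $\delta_z(d,k)=\max\{|\mathcal{X}|:\mathcal{X}\subset\mathbb{P}^d_\circ,\ \kappa(\mathcal{X})\le k\}$. $B(d,p)=\{x\in\mathbb{R}^d:\|x\|_1\le p\}$; for integers $p\ge0$, $N_p=|B(d,p)\cap\mathbb{P}^d_\circ|$ and $\kappa_p=\kappa(B(d,p)\cap\mathbb{P}^d_\circ)$ (so $N_0=\kappa_0=0$). With $p$ as in the claim, $\lambda(d,k)=N_{p-1}+\frac{d(k-\kappa_{p-1})}{p}$. *)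

theory Defs
  imports Complex_Main
begin

text \<open>Points of Z^d are represented as functions nat => int vanishing outside {0..<d}.\<close>

definition primitive :: "nat \<Rightarrow> (nat \<Rightarrow> int) \<Rightarrow> bool" where
  "primitive d x \<longleftrightarrow> (\<forall>i\<ge>d. x i = 0) \<and> Gcd (x ` {..<d}) = 1"

definition Pcirc :: "nat \<Rightarrow> (nat \<Rightarrow> int) set" where
  "Pcirc d = {x. primitive d x \<and> (\<exists>j<d. 0 < x j \<and> (\<forall>i<j. x i = 0))}"

definition kappa :: "nat \<Rightarrow> (nat \<Rightarrow> int) set \<Rightarrow> int" where
  "kappa d X = Max {(\<Sum>x\<in>X. \<bar>x i\<bar>) | i. i < d}"

definition delta_z :: "nat \<Rightarrow> nat \<Rightarrow> nat" where
  "delta_z d k = Max {card X | X. finite X \<and> X \<subseteq> Pcirc d \<and> kappa d X \<le> int k}"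

definition l1norm :: "nat \<Rightarrow> (nat \<Rightarrow> int) \<Rightarrow> int" where
  "l1norm d x = (\<Sum>i<d. \<bar>x i\<bar>)"

definition ballP :: "nat \<Rightarrow> nat \<Rightarrow> (nat \<Rightarrow> int) set" where
  "ballP d p = {x \<in> Pcirc d. l1norm d x \<le> int p}"

definition Nb :: "nat \<Rightarrow> nat \<Rightarrow> nat" where
  "Nb d p = card (ballP d p)"

definition kappab :: "nat \<Rightarrow> nat \<Rightarrow> int" where
  "kappab d p = kappa d (ballP d p)"

definition lambda_dk :: "nat \<Rightarrow> nat \<Rightarrow> nat \<Rightarrow> real" where
  "lambda_dk d k p = real (Nb d (p - 1)) + real d * (real k - real_of_int (kappab d (p - 1))) / real p"

end

theory Submission
  imports Defs "HOL-Combinatorics.Transposition"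
begin

text \<open>Swapping two coordinates and then fixing the sign is an involution of each ball
  \<open>ballP d q\<close>, so all column sums of the ball equal \<open>kappab d q\<close> and \<open>d * kappab d q\<close> is
  its total l1-mass. With \<open>m = p div d\<close>, lambda(d,k) is \<open>Nb d (p - 1) + 1\<close> in case (i)
  and \<open>Nb d p - 1\<close> in case (ii). A set X of that size with all column sums at most k has mass at
  most \<open>d * k\<close>; comparing it point by point with the ball of radius \<open>p - 1\<close> (resp. p), whose
  points are exactly the lightest primitive points, forces X to be that ball plus (resp. minus)
  a single point y of norm p. The column constraints then give \<open>\<bar>y i\<bar> \<le> m\<close> (resp. \<open>\<ge> m\<close>)
  for every i, hence \<open>\<bar>y i\<bar> = m\<close> since the norm is \<open>d * m\<close>; so m divides the gcd of y,
  contradicting primitivity as \<open>m \<noteq> 1\<close>. Therefore delta_z(d,k) lies strictly below the floor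
  of lambda(d,k).\<close>

lemma abs_le_l1norm: "t < d \<Longrightarrow> \<bar>x t\<bar> \<le> l1norm d x"
  unfolding l1norm_def by (rule member_le_sum) auto

lemma finite_ballP: "finite (ballP d q)"
proof (rule finite_subset)
  let ?F = "{x. \<forall>t. (t \<in> {..<d} \<longrightarrow> x t \<in> {-int q..int q}) \<and> (t \<notin> {..<d} \<longrightarrow> x t = 0)}"
  show "ballP d q \<subseteq> ?F"
  proof
    fix x assume x: "x \<in> ballP d q"
    then have "\<bar>x t\<bar> \<le> int q" if "t < d" for t
      using abs_le_l1norm[OF that, of x] by (simp add: ballP_def)
    with x show "x \<in> ?F" by (force simp: ballP_def Pcirc_def primitive_def abs_le_iff)
  qed
  show "finite ?F" by (rule finite_set_of_finite_funs) auto
qed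

lemma primitive_uminus: "primitive d (- y) \<longleftrightarrow> primitive d y"
proof -
  have "(- y) ` {..<d} = uminus ` y ` {..<d}" by auto
  then show ?thesis by (simp add: primitive_def)
qed

lemma primitive_has_nonzero_coord:
  assumes "0 < d" "primitive d y" obtains t where "t < d" "y t \<noteq> 0"
proof -
  have "y ` {..<d} \<noteq> {0}" using assms by (auto simp: primitive_def)
  then show ?thesis using that assms(1) by fastforce
qed

definition orient :: "nat \<Rightarrow> (nat \<Rightarrow> int) \<Rightarrow> nat \<Rightarrow> int" where
  "orient d y = (if \<exists>j<d. 0 < y j \<and> (\<forall>i<j. y i = 0) then y else - y)"

lemma abs_orient [simp]: "\<bar>orient d y t\<bar> = \<bar>y t\<bar>"
  by (simp add: orient_def)

lemma orient_in_Pcirc: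
  assumes "0 < d" "primitive d y" shows "orient d y \<in> Pcirc d"
proof -
  obtain t where t: "t < d" "y t \<noteq> 0"
    using assms by (rule primitive_has_nonzero_coord)
  define j where "j = (LEAST t. y t \<noteq> 0)"
  have "y j \<noteq> 0" unfolding j_def by (rule LeastI[of _ t]) (rule t(2))
  have "j < d" using Least_le[of "\<lambda>t. y t \<noteq> 0", OF t(2)] t(1) unfolding j_def by linarith
  have below: "\<forall>i<j. y i = 0" unfolding j_def using not_less_Least by blast
  show ?thesis
  proof (cases "0 < y j")
    case True
    then have "orient d y = y" using \<open>j < d\<close> below by (auto simp: orient_def)
    then show ?thesis using True \<open>j < d\<close> below assms(2) by (auto simp: Pcirc_def)
  next
    case False
    then have "y j < 0" using \<open>y j \<noteq> 0\<close> by linarith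
    have "\<not> (0 < y i \<and> (\<forall>i'<i. y i' = 0))" for i
      using below \<open>y j < 0\<close> by (cases i j rule: linorder_cases) auto
    then have "orient d y = - y" by (auto simp: orient_def)
    then show ?thesis
      using \<open>y j < 0\<close> \<open>j < d\<close> below assms(2) by (auto simp: Pcirc_def primitive_uminus)
  qed
qed

lemma orient_Pcirc: "x \<in> Pcirc d \<Longrightarrow> orient d x = x"
  by (auto simp: orient_def Pcirc_def)

lemma orient_uminus_Pcirc:
  assumes "x \<in> Pcirc d" shows "orient d (- x) = x"
proof -
  obtain j where j: "0 < x j" "\<forall>i<j. x i = 0" using assms by (auto simp: Pcirc_def)
  have "\<not> (0 < - x j' \<and> (\<forall>i<j'. - x i = 0))" for j'
    using j by (cases j j' rule: linorder_cases) force+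
  then show ?thesis by (auto simp: orient_def)
qed

definition colsum :: "(nat \<Rightarrow> int) set \<Rightarrow> nat \<Rightarrow> int" where
  "colsum X i = (\<Sum>x\<in>X. \<bar>x i\<bar>)"

definition swap_coords :: "nat \<Rightarrow> nat \<Rightarrow> nat \<Rightarrow> (nat \<Rightarrow> int) \<Rightarrow> nat \<Rightarrow> int" where
  "swap_coords d i j x = orient d (x \<circ> transpose i j)"

lemma swap_coords_in_ballP:
  assumes "i < d" "j < d" "x \<in> ballP d q" shows "swap_coords d i j x \<in> ballP d q"
proof -
  have perm: "bij_betw (transpose i j) {..<d} {..<d}" using assms(1,2) by simp
  have "(x \<circ> transpose i j) ` {..<d} = x ` {..<d}"
    using bij_betw_imp_surj_on[OF perm] by (metis image_comp)
  moreover have "transpose i j t = t" if "d \<le> t" for t using that assms(1,2) by simp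
  ultimately have "primitive d (x \<circ> transpose i j)"
    using assms(3) by (simp add: ballP_def Pcirc_def primitive_def)
  moreover have "l1norm d (orient d (x \<circ> transpose i j)) = l1norm d x"
    unfolding l1norm_def abs_orient using sum.reindex_bij_betw[OF perm, of "\<lambda>t. \<bar>x t\<bar>"] by simp
  ultimately show ?thesis
    using assms orient_in_Pcirc[of d] by (auto simp: swap_coords_def ballP_def)
qed

lemma swap_coords_involutory:
  assumes "x \<in> Pcirc d" shows "swap_coords d i j (swap_coords d i j x) = x"
proof -
  have "orient d y \<circ> transpose i j = x \<or> orient d y \<circ> transpose i j = - x"
    if "y = x \<circ> transpose i j" for y
    using that by (auto simp: orient_def fun_eq_iff)
  then show ?thesis
    using orient_Pcirc[OF assms] orient_uminus_Pcirc[OF assms] by (auto simp: swap_coords_def)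
qed

lemma colsum_ballP_eq:
  assumes "i < d" "j < d" shows "colsum (ballP d q) i = colsum (ballP d q) j"
proof -
  have "swap_coords d i j (swap_coords d i j x) = x" "swap_coords d i j x \<in> ballP d q"
    if "x \<in> ballP d q" for x
    using that swap_coords_involutory swap_coords_in_ballP[OF assms] by (auto simp: ballP_def)
  then show ?thesis
    unfolding colsum_def
    by (intro sum.reindex_bij_witness[where i="swap_coords d i j" and j="swap_coords d i j"])
      (auto simp: swap_coords_def)
qed

lemma kappa_eq_Max_colsum: "kappa d X = Max (colsum X ` {..<d})"
proof -
  have "{(\<Sum>x\<in>X. \<bar>x i\<bar>) | i. i < d} = colsum X ` {..<d}" by (auto simp: colsum_def)
  then show ?thesis unfolding kappa_def by (rule arg_cong)
qed

lemma kappa_le_iff: "0 < d \<Longrightarrow> kappa d X \<le> K \<longleftrightarrow> (\<forall>i<d. colsum X i \<le> K)"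
  unfolding kappa_eq_Max_colsum by (subst Max_le_iff) auto

lemma kappab_eq_colsum:
  assumes "i < d" shows "kappab d q = colsum (ballP d q) i"
proof -
  have "colsum (ballP d q) i' = colsum (ballP d q) i" if "i' < d" for i'
    using colsum_ballP_eq[OF that assms] .
  then have "colsum (ballP d q) ` {..<d} = {colsum (ballP d q) i}" using assms by blast
  then show ?thesis by (simp add: kappab_def kappa_eq_Max_colsum)
qed

lemma sum_l1norm_eq_sum_colsum: "(\<Sum>x\<in>X. l1norm d x) = (\<Sum>i<d. colsum X i)"
  unfolding l1norm_def colsum_def by (rule sum.swap)

lemma sum_l1norm_ballP: "(\<Sum>x\<in>ballP d q. l1norm d x) = int d * kappab d q"
proof -
  have "(\<Sum>i<d. colsum (ballP d q) i) = (\<Sum>i<d. kappab d q)"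
    using kappab_eq_colsum by (intro sum.cong) auto
  then show ?thesis by (simp add: sum_l1norm_eq_sum_colsum)
qed

lemma sum_exchange_lower_bound:
  fixes f :: "'a \<Rightarrow> int"
  assumes "finite X" "finite B" "\<forall>x\<in>B - X. f x \<le> t" "\<forall>x\<in>X - B. t < f x"
  shows "t * (int (card X) - int (card B)) + int (card (X - B)) \<le> sum f X - sum f B"
proof -
  have diff: "sum f X - sum f B = sum f (X - B) - sum f (B - X)"
    using sum.Int_Diff[OF assms(1), of f B] sum.Int_Diff[OF assms(2), of f X]
    by (simp add: Int_commute)
  have card_diff: "int (card X) - int (card B) = int (card (X - B)) - int (card (B - X))"
    using card_Int_Diff[OF assms(1), of B] card_Int_Diff[OF assms(2), of X]
    by (simp add: Int_commute)
  have "int (card (X - B)) * (t + 1) \<le> sum f (X - B)"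
    using assms(4) by (intro sum_bounded_below) (auto simp: zless_imp_add1_zle)
  moreover have "sum f (B - X) \<le> int (card (B - X)) * t"
    using assms(3) by (intro sum_bounded_above) auto
  ultimately show ?thesis unfolding diff card_diff by (simp add: algebra_simps)
qed

lemma exchange_one_more_point:
  fixes f :: "'a \<Rightarrow> int"
  assumes "finite X" "finite B" "card X = card B + 1"
    and "\<forall>x\<in>B. f x < s" "\<forall>x\<in>X - B. s \<le> f x" "sum f X \<le> sum f B + s"
  obtains y where "X = insert y B" "y \<notin> B" "f y = s"
proof -
  have "\<forall>x\<in>B - X. f x \<le> s - 1" "\<forall>x\<in>X - B. s - 1 < f x" using assms(4,5) by force+
  then have "card (X - B) \<le> 1"
    using sum_exchange_lower_bound[OF assms(1,2), of f "s - 1"] assms(3,6) by auto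
  moreover have "X - B \<noteq> {}"
    using assms(2,3) card_mono[of B X] by auto
  ultimately have "card (X - B) = 1"
    using assms(1) by (metis card_0_eq finite_Diff le_Suc_eq le_zero_eq One_nat_def)
  then obtain y where y: "X - B = {y}" by (rule card_1_singletonE)
  have "card (B - X) = 0"
    using \<open>card (X - B) = 1\<close> card_Int_Diff[OF assms(1), of B] card_Int_Diff[OF assms(2), of X] assms(3)
    by (simp add: Int_commute)
  then have X: "X = insert y B" using y assms(2) by auto
  have "y \<notin> B" using y by auto
  moreover have "sum f X = sum f B + f y" using X \<open>y \<notin> B\<close> assms(2) by simp
  ultimately show ?thesis using that X y assms(5,6) by force
qed

lemma exchange_one_less_point:
  fixes f :: "'a \<Rightarrow> int"
  assumes "finite X" "finite B" "card X + 1 = card B"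
    and "\<forall>x\<in>B. f x \<le> t" "\<forall>x\<in>X - B. t < f x" "sum f X + t \<le> sum f B"
  obtains y where "B = insert y X" "y \<notin> X" "f y = t"
proof -
  have "int (card X) - int (card B) = - 1" using assms(3) by simp
  then have "card (X - B) = 0"
    using sum_exchange_lower_bound[OF assms(1,2), of f t] assms(4-6) by auto
  then have "X \<subseteq> B" using assms(1) by auto
  then have "card (B - X) = 1" using assms(1,3) by (simp add: card_Diff_subset)
  then obtain y where y: "B - X = {y}" by (rule card_1_singletonE)
  then have B: "B = insert y X" using \<open>X \<subseteq> B\<close> by auto
  have "y \<notin> X" using y by auto
  moreover have "sum f B = sum f X + f y" using B \<open>y \<notin> X\<close> assms(1) by simp
  ultimately show ?thesis using that B assms(4,6) by force
qed

lemma abs_coords_eq_if_one_sided: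
  assumes "l1norm d y = int d * m" "(\<forall>i<d. \<bar>y i\<bar> \<le> m) \<or> (\<forall>i<d. m \<le> \<bar>y i\<bar>)" "i < d"
  shows "\<bar>y i\<bar> = m"
  using assms(2)
proof
  assume le: "\<forall>i<d. \<bar>y i\<bar> \<le> m"
  have "(\<Sum>i<d. m - \<bar>y i\<bar>) = 0" using assms(1) by (simp add: l1norm_def sum_subtractf)
  then show ?thesis using le assms(3) sum_nonneg_eq_0_iff[of "{..<d}" "\<lambda>i. m - \<bar>y i\<bar>"] by auto
next
  assume ge: "\<forall>i<d. m \<le> \<bar>y i\<bar>"
  have "(\<Sum>i<d. \<bar>y i\<bar> - m) = 0" using assms(1) by (simp add: l1norm_def sum_subtractf)
  then show ?thesis using ge assms(3) sum_nonneg_eq_0_iff[of "{..<d}" "\<lambda>i. \<bar>y i\<bar> - m"] by auto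
qed

lemma primitive_const_abs_coords_eq_1:
  assumes "primitive d y" "0 < d" "\<forall>i<d. \<bar>y i\<bar> = m" shows "m = 1"
proof -
  have "abs ` y ` {..<d} = {m}" using assms(2,3) by force
  then have "Gcd (y ` {..<d}) = \<bar>m\<bar>" by (metis Gcd_abs_eq Gcd_singleton normalize_int_def)
  moreover have "0 \<le> m" using assms(2,3) by force
  ultimately show ?thesis using assms(1) by (simp add: primitive_def)
qed

definition admissible :: "nat \<Rightarrow> int \<Rightarrow> (nat \<Rightarrow> int) set \<Rightarrow> bool" where
  "admissible d K X \<longleftrightarrow> finite X \<and> X \<subseteq> Pcirc d \<and> (\<forall>i<d. colsum X i \<le> K)"

lemma delta_z_less:
  assumes "0 < d"
    and "\<And>X. admissible d (int k) X \<Longrightarrow> card X \<noteq> c"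
  shows "delta_z d k < c"
proof -
  define S where "S = {card X | X. finite X \<and> X \<subseteq> Pcirc d \<and> kappa d X \<le> int k}"
  have less: "n < c" if "n \<in> S" for n
  proof (rule ccontr)
    assume "\<not> n < c"
    from that obtain X where X: "n = card X" "finite X" "X \<subseteq> Pcirc d" "kappa d X \<le> int k"
      unfolding S_def by blast
    with \<open>\<not> n < c\<close> obtain Y where Y: "Y \<subseteq> X" "card Y = c"
      by (metis obtain_subset_with_card_n not_less)
    have mono: "colsum Y i \<le> colsum X i" for i
      unfolding colsum_def using X(2) Y(1) by (rule sum_mono2) auto
    have "\<forall>i<d. colsum X i \<le> int k" using X(4) kappa_le_iff[OF assms(1)] by blast
    then have "\<forall>i<d. colsum Y i \<le> int k" using order_trans[OF mono] by blast
    moreover have "finite Y" using Y(1) X(2) by (rule finite_subset)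
    ultimately show False using assms(2) Y X(3) by (auto simp: admissible_def)
  qed
  then have "finite S" using finite_subset[of S "{..<c}"] by auto
  moreover have "0 \<in> S"
    using kappa_le_iff[OF assms(1), of "{}"] unfolding S_def colsum_def by force
  ultimately have "delta_z d k \<in> S" unfolding delta_z_def S_def[symmetric] by (intro Max_in) auto
  then show ?thesis by (rule less)
qed

lemma ballP_mono: "q \<le> q' \<Longrightarrow> ballP d q \<subseteq> ballP d q'"
  by (auto simp: ballP_def)

lemma ballP_shell:
  fixes d p :: nat
  assumes "0 < p"
  defines "D \<equiv> card (ballP d p - ballP d (p - 1))"
  shows "int d * kappab d p = int d * kappab d (p - 1) + int p * int D"
    and "Nb d p = Nb d (p - 1) + D"
proof -
  have sub: "ballP d (p - 1) \<subseteq> ballP d p" by (rule ballP_mono) simp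
  have "l1norm d x = int p" if "x \<in> ballP d p - ballP d (p - 1)" for x
    using that assms(1) by (auto simp: ballP_def)
  then have "(\<Sum>x\<in>ballP d p - ballP d (p - 1). l1norm d x) = int p * int D"
    by (simp add: D_def)
  then show "int d * kappab d p = int d * kappab d (p - 1) + int p * int D"
    using sum.subset_diff[OF sub finite_ballP, of "l1norm d"] by (simp add: sum_l1norm_ballP)
  show "Nb d p = Nb d (p - 1) + D"
    unfolding Nb_def D_def using card_Diff_subset[OF finite_subset[OF sub finite_ballP] sub]
      card_mono[OF finite_ballP sub] by simp
qed

lemma admissible_card_ne_Suc_Nb:
  fixes m :: int
  assumes "0 < d" "0 < p" "int d * m = int p" "m \<noteq> 1" "admissible d (kappab d (p - 1) + m) X"
  shows "card X \<noteq> Nb d (p - 1) + 1"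
proof
  assume card: "card X = Nb d (p - 1) + 1"
  have "finite X" "X \<subseteq> Pcirc d" "\<forall>i<d. colsum X i \<le> kappab d (p - 1) + m"
    using assms(5) by (simp_all add: admissible_def)
  define B where "B = ballP d (p - 1)"
  have "(\<Sum>x\<in>X. l1norm d x) \<le> (\<Sum>i<d. kappab d (p - 1) + m)"
    unfolding sum_l1norm_eq_sum_colsum using \<open>\<forall>i<d. colsum X i \<le> _\<close> by (intro sum_mono) auto
  then have "sum (l1norm d) X \<le> sum (l1norm d) B + int p"
    using assms(3) by (simp add: B_def sum_l1norm_ballP algebra_simps)
  moreover have "\<forall>x\<in>B. l1norm d x < int p" "\<forall>x\<in>X - B. int p \<le> l1norm d x"
    using assms(2) \<open>X \<subseteq> Pcirc d\<close> by (force simp: B_def ballP_def)+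
  ultimately obtain y where y: "X = insert y B" "y \<notin> B" "l1norm d y = int d * m"
    using exchange_one_more_point[OF \<open>finite X\<close> finite_ballP] card assms(3)
    unfolding B_def Nb_def by metis
  have "\<bar>y i\<bar> \<le> m" if "i < d" for i
  proof -
    have "colsum X i = kappab d (p - 1) + \<bar>y i\<bar>"
      using y(1,2) kappab_eq_colsum[OF that] by (simp add: colsum_def B_def finite_ballP)
    then show ?thesis using \<open>\<forall>i<d. colsum X i \<le> _\<close> that by force
  qed
  then have "\<forall>i<d. \<bar>y i\<bar> = m" using abs_coords_eq_if_one_sided[OF y(3)] by blast
  moreover have "primitive d y" using y(1) \<open>X \<subseteq> Pcirc d\<close> by (auto simp: Pcirc_def)
  ultimately show False using primitive_const_abs_coords_eq_1 assms(1,4) by blast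
qed

lemma admissible_Suc_card_ne_Nb:
  fixes m :: int
  assumes "0 < d" "int d * m = int p" "m \<noteq> 1" "admissible d (kappab d p - m) X"
  shows "card X + 1 \<noteq> Nb d p"
proof
  assume card: "card X + 1 = Nb d p"
  have "finite X" "X \<subseteq> Pcirc d" "\<forall>i<d. colsum X i \<le> kappab d p - m"
    using assms(4) by (simp_all add: admissible_def)
  define B where "B = ballP d p"
  have "(\<Sum>x\<in>X. l1norm d x) \<le> (\<Sum>i<d. kappab d p - m)"
    unfolding sum_l1norm_eq_sum_colsum using \<open>\<forall>i<d. colsum X i \<le> _\<close> by (intro sum_mono) auto
  then have "sum (l1norm d) X + int p \<le> sum (l1norm d) B"
    using assms(2) by (simp add: B_def sum_l1norm_ballP algebra_simps)
  moreover have "\<forall>x\<in>B. l1norm d x \<le> int p" "\<forall>x\<in>X - B. int p < l1norm d x"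
    using \<open>X \<subseteq> Pcirc d\<close> by (force simp: B_def ballP_def)+
  ultimately obtain y where y: "B = insert y X" "y \<notin> X" "l1norm d y = int d * m"
    using exchange_one_less_point[OF \<open>finite X\<close> finite_ballP] card assms(2)
    unfolding B_def Nb_def by metis
  have "m \<le> \<bar>y i\<bar>" if "i < d" for i
  proof -
    have "kappab d p = colsum X i + \<bar>y i\<bar>"
      using y(1,2) kappab_eq_colsum[OF that] \<open>finite X\<close> by (simp add: colsum_def B_def)
    then show ?thesis using \<open>\<forall>i<d. colsum X i \<le> _\<close> that by force
  qed
  then have "\<forall>i<d. \<bar>y i\<bar> = m" using abs_coords_eq_if_one_sided[OF y(3)] by blast
  moreover have "primitive d y" using y(1) by (auto simp: B_def ballP_def Pcirc_def)
  ultimately show False using primitive_const_abs_coords_eq_1 assms(1,3) by blast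
qed

lemma lambda_dk_extension_case:
  fixes m :: int
  assumes "0 < p" "int d * m = int p" "int k - kappab d (p - 1) = m"
  shows "lambda_dk d k p = real (Nb d (p - 1)) + 1"
proof -
  have "real d * (real k - real_of_int (kappab d (p - 1))) = real p"
    using assms(2,3) by (metis of_int_diff of_int_mult of_int_of_nat_eq)
  then show ?thesis using assms(1) by (simp add: lambda_dk_def)
qed

lemma lambda_dk_deletion_case:
  fixes m :: int
  assumes "0 < p" "int d * m = int p" "int k = kappab d p - m"
  shows "lambda_dk d k p = real (Nb d p) - 1"
proof -
  define D where "D = card (ballP d p - ballP d (p - 1))"
  have "int d * int k = int d * kappab d p - int d * m" using assms(3) by (simp add: right_diff_distrib)
  then have "int d * (int k - kappab d (p - 1)) = int p * (int D - 1)"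
    using ballP_shell(1)[OF assms(1), of d] assms(2) unfolding D_def by (simp add: algebra_simps)
  then have "real d * (real k - real_of_int (kappab d (p - 1))) = real p * (real D - 1)"
    by (metis of_int_diff of_int_mult of_int_of_nat_eq of_int_1)
  then show ?thesis
    using assms(1) ballP_shell(2)[OF assms(1), of d] by (simp add: lambda_dk_def D_def)
qed

lemma Nb_pos: "0 < d \<Longrightarrow> 0 < kappab d q \<Longrightarrow> 0 < Nb d q"
  using kappab_eq_colsum[of 0 d q] finite_ballP[of d q] by (auto simp: Nb_def colsum_def card_gt_0_iff)

theorem lemma3p2:
  fixes d k p :: nat
  assumes "0 < d" and "0 < k"
    and "0 < p" and "int k < kappab d p"
    and "\<forall>q. 0 < q \<and> q < p \<longrightarrow> kappab d q \<le> int k"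
    and "d dvd p" and "d \<noteq> p"
    and "int k - kappab d (p - 1) = int (p div d) \<or> kappab d p - int k = int (p div d)"
  shows "int (delta_z d k) \<noteq> \<lfloor>lambda_dk d k p\<rfloor>"
proof -
  define m where "m = int (p div d)"
  have dm: "int d * m = int p" using \<open>d dvd p\<close> by (simp add: m_def flip: of_nat_mult)
  have "m \<noteq> 1" using \<open>d \<noteq> p\<close> dm by auto
  have "0 < m" using zero_less_mult_pos[of "int d" m] dm \<open>0 < d\<close> \<open>0 < p\<close> by simp
  from assms(8) consider (extension) "int k - kappab d (p - 1) = m" | (deletion) "int k = kappab d p - m"
    unfolding m_def by linarith
  then show ?thesis
  proof cases
    case extension
    have "delta_z d k < Nb d (p - 1) + 1"
      using admissible_card_ne_Suc_Nb[OF \<open>0 < d\<close> \<open>0 < p\<close> dm \<open>m \<noteq> 1\<close>] extension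
      by (intro delta_z_less[OF \<open>0 < d\<close>]) (simp add: algebra_simps)
    then show ?thesis using lambda_dk_extension_case[OF \<open>0 < p\<close> dm extension] by simp
  next
    case deletion
    have "0 < Nb d p" using Nb_pos \<open>0 < d\<close> \<open>0 < m\<close> deletion by force
    have "delta_z d k < Nb d p - 1"
      using admissible_Suc_card_ne_Nb[OF \<open>0 < d\<close> dm \<open>m \<noteq> 1\<close>] deletion \<open>0 < Nb d p\<close>
      by (intro delta_z_less[OF \<open>0 < d\<close>]) fastforce
    then show ?thesis
      using lambda_dk_deletion_case[OF \<open>0 < p\<close> dm deletion] \<open>0 < Nb d p\<close> by simp
  qed
qed

end
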